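(* Let $F,G$ be graphs with $F\to G$. Then $\mathsf{HDE}(F,G)\le |V_F|/|V_G|$, $\mathsf{HDE}(F,G)\le \mathsf{CC}(F)/\mathsf{CC}(G)$, and, if $\alpha(G)\ge1$, $\mathsf{HDE}(F,G)\le \alpha(F)/\alpha(G)$.
   Context: Graphs are finite directed graphs $G=(V_G,E_G)$ with $V_G$ nonempty finite and $E_G\subseteq V_G\times V_G$ (loops allowed). Homomorphisms are vertex maps sending edges to edges; $\hom(F,G)$ is their number and $F\to G$ means $\hom(F,G)\ge1$. $\mathsf{HDE}(F,G)=\sup\{c\in\mathbb R:\hom(F,T)\ge\hom(G,T)^c\text{ for all graphs }T\}$. $\mathsf{CC}(H)$ is the number of connected components of $H$ ignoring edge directions. $\alpha(H)$ is the maximum size of a set $I\subseteq V_H$ such that $E_H\cap (I\times I)=\emptyset$ (no edges, including loops, within $I$). *)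

theory Defs
  imports Complex_Main "HOL-Library.FuncSet"
begin

type_synonym 'a graph = "'a set \<times> ('a \<times> 'a) set"

definition verts :: "'a graph \<Rightarrow> 'a set" where "verts G = fst G"
definition edges :: "'a graph \<Rightarrow> ('a \<times> 'a) set" where "edges G = snd G"

definition is_graph :: "'a graph \<Rightarrow> bool" where
  "is_graph G \<longleftrightarrow> verts G \<noteq> {} \<and> finite (verts G) \<and> edges G \<subseteq> verts G \<times> verts G"

definition homs :: "'a graph \<Rightarrow> 'b graph \<Rightarrow> ('a \<Rightarrow> 'b) set" where
  "homs F T = {f \<in> verts F \<rightarrow>\<^sub>E verts T. \<forall>(u,v) \<in> edges F. (f u, f v) \<in> edges T}"

definition hom_count :: "'a graph \<Rightarrow> 'b graph \<Rightarrow> nat" where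
  "hom_count F T = card (homs F T)"

definition hom_exists :: "'a graph \<Rightarrow> 'b graph \<Rightarrow> bool" where
  "hom_exists F G \<longleftrightarrow> hom_count F G \<ge> 1"

text \<open>Homomorphism domination exponent; test graphs T range over graphs on nat
  (every finite graph is isomorphic to one, and hom counts are isomorphism invariant).\<close>
definition HDE :: "'a graph \<Rightarrow> 'b graph \<Rightarrow> real" where
  "HDE F G = Sup {c::real. \<forall>T :: nat graph. is_graph T \<longrightarrow>
      real (hom_count F T) \<ge> real (hom_count G T) powr c}"

definition CC :: "'a graph \<Rightarrow> nat" where
  "CC G = card (verts G // ((edges G \<union> (edges G)\<inverse>)\<^sup>*))"

text \<open>Independence number (loops forbid a vertex from an independent set).\<close>
definition indep_num :: "'a graph \<Rightarrow> nat" where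
  "indep_num G = Max {card I | I. I \<subseteq> verts G \<and> edges G \<inter> (I \<times> I) = {}}"

end

theory Submission imports Defs begin

(* To bound HDE(F,G) by a/b it suffices to find test graphs T_n with hom(F,T_n) = O(n^a) and
   hom(G,T_n) >= n^b: an exponent c with hom(F,T) >= hom(G,T)^c for all T then gives
   n^(bc - a) = O(1), i.e. c <= a/b.  The hypothesis F -> G only serves to make c = 0 such an
   exponent, so that the supremum is taken over a nonempty set.

   Three families of looped test graphs do the job: the complete graph on n vertices, into which
   every vertex map is a homomorphism (n^|V|); n disjoint loops, where homomorphisms are the
   colourings of the components (n^CC); and the star with a looped centre and n leaves, where a
   homomorphism is an independent set (the preimage of the leaves) together with a labelling of
   it by leaves, so that n^alpha <= hom <= 2^|V| n^alpha. *)

lemma homs_finite: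
  assumes "is_graph F" "is_graph T"
  shows "finite (homs F T)"
proof (rule finite_subset)
  show "homs F T \<subseteq> verts F \<rightarrow>\<^sub>E verts T" unfolding homs_def by auto
  show "finite (verts F \<rightarrow>\<^sub>E verts T)"
    using assms by (intro finite_PiE) (auto simp: is_graph_def)
qed

lemma restrict_comp_in_homs:
  assumes "is_graph F" "h \<in> homs F G" "g \<in> homs G T"
  shows "restrict (g \<circ> h) (verts F) \<in> homs F T"
  using assms unfolding homs_def is_graph_def by (auto simp: PiE_def Pi_def split: prod.splits)

lemma hom_count_pos_trans:
  assumes F: "is_graph F" and T: "is_graph T" and "hom_exists F G" "hom_count G T > 0"
  shows "hom_count F T > 0"
proof -
  obtain h where "h \<in> homs F G"
    using \<open>hom_exists F G\<close> unfolding hom_exists_def hom_count_def by fastforce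
  moreover obtain g where "g \<in> homs G T"
    using \<open>hom_count G T > 0\<close> unfolding hom_count_def by fastforce
  ultimately have "homs F T \<noteq> {}" using restrict_comp_in_homs[OF F] by blast
  then show ?thesis using homs_finite[OF F T] unfolding hom_count_def by (simp add: card_gt_0_iff)
qed

definition dominating_exponent :: "'a graph \<Rightarrow> 'b graph \<Rightarrow> real \<Rightarrow> bool" where
  "dominating_exponent F G c \<longleftrightarrow>
     (\<forall>T :: nat graph. is_graph T \<longrightarrow> real (hom_count G T) powr c \<le> real (hom_count F T))"

lemma dominating_exponent_0:
  assumes "is_graph F" "hom_exists F G"
  shows "dominating_exponent F G 0"
  unfolding dominating_exponent_def
proof (intro allI impI)
  fix T :: "nat graph" assume T: "is_graph T"
  show "real (hom_count G T) powr 0 \<le> real (hom_count F T)"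
  proof (cases "hom_count G T = 0")
    \<comment> \<open>the case True is trivial because \<open>0 powr 0 = 0\<close>\<close>
    case False
    then have "hom_count F T > 0" using hom_count_pos_trans[OF assms(1) T assms(2)] by simp
    then show ?thesis by simp
  qed simp
qed

lemma HDE_le:
  assumes "is_graph F" "hom_exists F G" "\<And>c. dominating_exponent F G c \<Longrightarrow> c \<le> B"
  shows "HDE F G \<le> B"
proof -
  have "HDE F G = Sup (Collect (dominating_exponent F G))"
    unfolding HDE_def dominating_exponent_def by simp
  also have "\<dots> \<le> B"
    using dominating_exponent_0[OF assms(1,2)] assms(3) by (intro cSup_least) auto
  finally show ?thesis .
qed

lemma nat_powr_bounded_imp_nonpos:
  fixes d K :: real
  assumes bounded: "\<And>n::nat. n \<ge> 1 \<Longrightarrow> real n powr d \<le> K"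
  shows "d \<le> 0"
proof (rule ccontr)
  assume "\<not> d \<le> 0"
  then have d: "d > 0" by simp
  have K: "K \<ge> 1" using bounded[of 1] by simp
  obtain n :: nat where n: "K powr (1 / d) < real n" using reals_Archimedean2 by blast
  moreover have "K powr (1 / d) > 0" using K by simp
  ultimately have "real n > 0" by linarith
  then have "n \<ge> 1" by simp
  have "K = (K powr (1 / d)) powr d" using d K by (simp add: powr_powr)
  also have "\<dots> < real n powr d" using n d K by (intro powr_less_mono2) auto
  finally show False using bounded[OF \<open>n \<ge> 1\<close>] by simp
qed

lemma dominating_exponent_le_growth_ratio:
  fixes T :: "nat \<Rightarrow> nat graph"
  assumes c: "dominating_exponent F G c"
    and T: "\<And>n. n \<ge> 1 \<Longrightarrow> is_graph (T n)"
    and upper: "\<And>n. n \<ge> 1 \<Longrightarrow> real (hom_count F (T n)) \<le> K * real n ^ a"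
    and lower: "\<And>n. n \<ge> 1 \<Longrightarrow> real n ^ b \<le> real (hom_count G (T n))"
    and "b > 0"
  shows "c \<le> real a / real b"
proof (cases "c \<le> 0")
  case True
  moreover have "real a / real b \<ge> 0" by simp
  ultimately show ?thesis by linarith
next
  case False
  have "real n powr (real b * c - real a) \<le> K" if n: "n \<ge> 1" for n
  proof -
    have "real n powr (real b * c) = (real n ^ b) powr c"
      using n by (simp add: powr_powr flip: powr_realpow)
    also have "\<dots> \<le> real (hom_count G (T n)) powr c"
      using lower[OF n] False by (intro powr_mono2) auto
    also have "\<dots> \<le> real (hom_count F (T n))"
      using c T[OF n] unfolding dominating_exponent_def by blast
    also have "\<dots> \<le> K * real n powr real a"
      using upper[OF n] n by (simp add: powr_realpow)
    finally show ?thesis using n by (simp add: powr_diff divide_le_eq)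
  qed
  then have "real b * c - real a \<le> 0" by (rule nat_powr_bounded_imp_nonpos)
  then show ?thesis using \<open>b > 0\<close> by (simp add: field_simps)
qed

lemma HDE_le_growth_ratio:
  fixes F :: "'a graph" and G :: "'b graph" and T :: "nat \<Rightarrow> nat graph"
  assumes "is_graph F" "hom_exists F G"
    and "\<And>n. n \<ge> 1 \<Longrightarrow> is_graph (T n)"
    and "\<And>n. n \<ge> 1 \<Longrightarrow> real (hom_count F (T n)) \<le> K * real n ^ a"
    and "\<And>n. n \<ge> 1 \<Longrightarrow> real n ^ b \<le> real (hom_count G (T n))"
    and "b > 0"
  shows "HDE F G \<le> real a / real b"
proof (rule HDE_le[OF assms(1,2)])
  show "c \<le> real a / real b" if "dominating_exponent F G c" for c
    using dominating_exponent_le_growth_ratio[OF that assms(3-6)] .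
qed

lemma card_verts_pos: "is_graph G \<Longrightarrow> card (verts G) > 0"
  by (simp add: is_graph_def card_gt_0_iff)

definition looped_complete :: "nat \<Rightarrow> nat graph" where
  "looped_complete n = ({0..<n}, {0..<n} \<times> {0..<n})"

lemma is_graph_looped_complete: "n \<ge> 1 \<Longrightarrow> is_graph (looped_complete n)"
  by (auto simp: is_graph_def looped_complete_def verts_def edges_def)

lemma hom_count_looped_complete:
  assumes "is_graph F"
  shows "hom_count F (looped_complete n) = n ^ card (verts F)"
proof -
  have "homs F (looped_complete n) = verts F \<rightarrow>\<^sub>E {0..<n}"
    using assms unfolding homs_def looped_complete_def verts_def edges_def is_graph_def
    by (auto simp: PiE_def Pi_def)
  then show ?thesis
    using assms unfolding hom_count_def is_graph_def by (simp add: card_funcsetE)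
qed

definition undirected_reach :: "'a graph \<Rightarrow> ('a \<times> 'a) set" where
  "undirected_reach F = (edges F \<union> (edges F)\<inverse>)\<^sup>*"

lemma CC_eq_card_quotient: "CC F = card (verts F // undirected_reach F)"
  unfolding CC_def undirected_reach_def ..

lemma undirected_reach_Image_eq:
  assumes "(u, v) \<in> undirected_reach F"
  shows "undirected_reach F `` {u} = undirected_reach F `` {v}"
proof -
  have "sym (undirected_reach F)"
    unfolding undirected_reach_def by (rule sym_rtrancl) (auto simp: sym_def)
  then have "(v, u) \<in> undirected_reach F" using assms by (meson symD)
  then show ?thesis
    using assms unfolding undirected_reach_def by (auto intro: rtrancl_trans)
qed

lemma finite_verts_quotient: "is_graph F \<Longrightarrow> finite (verts F // R)"
  unfolding quotient_def is_graph_def by auto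

lemma CC_pos: "is_graph F \<Longrightarrow> CC F > 0"
  unfolding CC_eq_card_quotient using finite_verts_quotient[of F]
  by (auto simp: is_graph_def quotient_def card_gt_0_iff)

definition looped_discrete :: "nat \<Rightarrow> nat graph" where
  "looped_discrete n = ({0..<n}, Id_on {0..<n})"

lemma is_graph_looped_discrete: "n \<ge> 1 \<Longrightarrow> is_graph (looped_discrete n)"
  by (auto simp: is_graph_def looped_discrete_def verts_def edges_def)

lemma hom_looped_discrete_const:
  assumes f: "f \<in> homs F (looped_discrete n)" and uv: "(u, v) \<in> undirected_reach F"
  shows "f u = f v"
  using uv unfolding undirected_reach_def
proof (induction rule: rtrancl_induct)
  case (step v w)
  then have "f v = f w"
    using f unfolding homs_def looped_discrete_def edges_def by (auto simp: Id_on_def)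
  with step.IH show ?case by simp
qed simp

lemma undirected_reach_Image_subset:
  assumes F: "is_graph F" and v: "v \<in> verts F"
  shows "undirected_reach F `` {v} \<subseteq> verts F"
proof
  fix w assume "w \<in> undirected_reach F `` {v}"
  then have "(v, w) \<in> (edges F \<union> (edges F)\<inverse>)\<^sup>*" unfolding undirected_reach_def by simp
  then show "w \<in> verts F"
    by (induction rule: rtrancl_induct) (use F v in \<open>auto simp: is_graph_def\<close>)
qed

lemma component_rep:
  assumes F: "is_graph F" and C: "C \<in> verts F // undirected_reach F"
  shows "(SOME x. x \<in> C) \<in> C" "C \<subseteq> verts F"
    "undirected_reach F `` {SOME x. x \<in> C} = C"
proof -
  obtain v where v: "v \<in> verts F" and Cv: "C = undirected_reach F `` {v}"
    using C by (auto simp: quotient_def)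
  have "v \<in> C" unfolding Cv undirected_reach_def by simp
  then show some: "(SOME x. x \<in> C) \<in> C" by (rule someI)
  show "C \<subseteq> verts F" unfolding Cv by (rule undirected_reach_Image_subset[OF F v])
  show "undirected_reach F `` {SOME x. x \<in> C} = C"
    using some undirected_reach_Image_eq unfolding Cv by (metis Image_singleton_iff)
qed

lemma hom_count_looped_discrete:
  assumes F: "is_graph F"
  shows "hom_count F (looped_discrete n) = n ^ CC F"
proof -
  let ?R = "undirected_reach F"
  let ?Q = "verts F // ?R"
  let ?H = "homs F (looped_discrete n)"
  define collapse where "collapse f = (\<lambda>C\<in>?Q. f (SOME x. x \<in> C))" for f :: "'a \<Rightarrow> nat"
  define expand where "expand g = (\<lambda>v\<in>verts F. g (?R `` {v}))" for g :: "'a set \<Rightarrow> nat"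
  have component: "?R `` {v} \<in> ?Q" if "v \<in> verts F" for v
    using that by (auto simp: quotient_def)
  have "bij_betw collapse ?H (?Q \<rightarrow>\<^sub>E {0..<n})"
  proof (rule bij_betw_byWitness[where f' = expand])
    show "\<forall>f\<in>?H. expand (collapse f) = f"
    proof
      fix f assume f: "f \<in> ?H"
      show "expand (collapse f) = f"
      proof
        fix v show "expand (collapse f) v = f v"
        proof (cases "v \<in> verts F")
          case True
          have "(v, SOME x. x \<in> ?R `` {v}) \<in> ?R"
            using component_rep(1)[OF F component[OF True]] by simp
          then show ?thesis
            using True component[OF True] hom_looped_discrete_const[OF f]
            by (simp add: expand_def collapse_def)
        qed (use f in \<open>auto simp: expand_def homs_def\<close>)
      qed
    qed
    show "\<forall>g\<in>?Q \<rightarrow>\<^sub>E {0..<n}. collapse (expand g) = g"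
    proof
      fix g assume g: "g \<in> ?Q \<rightarrow>\<^sub>E {0..<n}"
      show "collapse (expand g) = g"
      proof
        fix C show "collapse (expand g) C = g C"
          using g component_rep[OF F, of C]
          by (cases "C \<in> ?Q") (auto simp: collapse_def expand_def)
      qed
    qed
    show "collapse ` ?H \<subseteq> ?Q \<rightarrow>\<^sub>E {0..<n}"
      using component_rep[OF F]
      by (fastforce simp: collapse_def homs_def looped_discrete_def verts_def)
    show "expand ` (?Q \<rightarrow>\<^sub>E {0..<n}) \<subseteq> ?H"
    proof clarify
      fix g assume g: "g \<in> ?Q \<rightarrow>\<^sub>E {0..<n}"
      have "expand g \<in> verts F \<rightarrow>\<^sub>E {0..<n}"
        using g component by (auto simp: expand_def)
      moreover have "expand g u = expand g v" if uv: "(u, v) \<in> edges F" for u v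
      proof -
        have "(u, v) \<in> ?R" using uv unfolding undirected_reach_def by auto
        then have "?R `` {u} = ?R `` {v}" by (rule undirected_reach_Image_eq)
        then show ?thesis using uv F by (auto simp: expand_def is_graph_def)
      qed
      ultimately show "expand g \<in> ?H"
        using F unfolding homs_def looped_discrete_def verts_def edges_def is_graph_def
        by (auto simp: Id_on_def)
    qed
  qed
  then show ?thesis
    using finite_verts_quotient[OF F]
    by (simp add: hom_count_def CC_eq_card_quotient bij_betw_same_card card_funcsetE)
qed

definition indep_sets :: "'a graph \<Rightarrow> 'a set set" where
  "indep_sets F = {I. I \<subseteq> verts F \<and> edges F \<inter> (I \<times> I) = {}}"

lemma finite_indep_sets: "is_graph F \<Longrightarrow> finite (indep_sets F)"
  by (rule finite_subset[of _ "Pow (verts F)"]) (auto simp: indep_sets_def is_graph_def)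

lemma finite_indep_set: "is_graph F \<Longrightarrow> I \<in> indep_sets F \<Longrightarrow> finite I"
  unfolding indep_sets_def is_graph_def by (auto intro: finite_subset)

lemma card_indep_sets_le:
  assumes "is_graph F"
  shows "card (indep_sets F) \<le> 2 ^ card (verts F)"
proof -
  have "card (indep_sets F) \<le> card (Pow (verts F))"
    using assms by (intro card_mono) (auto simp: indep_sets_def is_graph_def)
  also have "\<dots> = 2 ^ card (verts F)" using assms by (simp add: card_Pow is_graph_def)
  finally show ?thesis .
qed

lemma indep_num_eq_Max: "indep_num F = Max (card ` indep_sets F)"
  unfolding indep_num_def indep_sets_def by (rule arg_cong[where f = Max]) auto

lemma card_le_indep_num: "is_graph F \<Longrightarrow> I \<in> indep_sets F \<Longrightarrow> card I \<le> indep_num F"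
  unfolding indep_num_eq_Max using finite_indep_sets[of F] by (intro Max_ge) auto

lemma indep_num_attained: "is_graph F \<Longrightarrow> \<exists>I\<in>indep_sets F. card I = indep_num F"
proof -
  assume F: "is_graph F"
  have "{} \<in> indep_sets F" by (simp add: indep_sets_def)
  then have "indep_num F \<in> card ` indep_sets F"
    unfolding indep_num_eq_Max using finite_indep_sets[OF F] by (intro Max_in) auto
  then show ?thesis by auto
qed

definition looped_star :: "nat \<Rightarrow> nat graph" where
  "looped_star n = ({0..n}, ({0} \<times> {0..n}) \<union> ({0..n} \<times> {0}))"

lemma is_graph_looped_star: "is_graph (looped_star n)"
  by (auto simp: is_graph_def looped_star_def verts_def edges_def)

lemma hom_count_looped_star:
  assumes F: "is_graph F"
  shows "hom_count F (looped_star n) = (\<Sum>I\<in>indep_sets F. n ^ card I)"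
proof -
  let ?H = "homs F (looped_star n)"
  let ?L = "Sigma (indep_sets F) (\<lambda>I. I \<rightarrow>\<^sub>E {1..n})"
  define support where "support f = {v \<in> verts F. f v \<noteq> 0}" for f :: "'a \<Rightarrow> nat"
  define decompose where "decompose f = (support f, restrict f (support f))" for f
  define glue where "glue p = (\<lambda>v\<in>verts F. if v \<in> fst p then snd p v else 0)"
    for p :: "'a set \<times> ('a \<Rightarrow> nat)"
  have "bij_betw decompose ?H ?L"
  proof (rule bij_betw_byWitness[where f' = glue])
    show "\<forall>f\<in>?H. glue (decompose f) = f"
    proof
      fix f assume "f \<in> ?H"
      then have f: "f \<in> extensional (verts F)" by (simp add: homs_def PiE_def)
      show "glue (decompose f) = f"
      proof
        fix v
        show "glue (decompose f) v = f v"
        proof (cases "v \<in> verts F")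
          case True
          then have "glue (decompose f) v = (if f v \<noteq> 0 then f v else 0)"
            by (simp add: glue_def decompose_def support_def)
          then show ?thesis by simp
        next
          case False
          then show ?thesis using extensional_arb[OF f False] by (simp add: glue_def)
        qed
      qed
    qed
    show "\<forall>p\<in>?L. decompose (glue p) = p"
    proof clarify
      fix I g assume I: "I \<in> indep_sets F" and g: "g \<in> I \<rightarrow>\<^sub>E {1..n}"
      have IV: "I \<subseteq> verts F" using I by (simp add: indep_sets_def)
      have g_pos: "g v \<noteq> 0" if "v \<in> I" for v using PiE_mem[OF g that] by simp
      have "support (glue (I, g)) = I"
        using IV g_pos by (auto simp: support_def glue_def)
      moreover have "restrict (glue (I, g)) I = g"
      proof -
        have "restrict (glue (I, g)) I = restrict g I"
          using IV by (intro restrict_ext) (auto simp: glue_def)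
        also have "\<dots> = g" using g by (simp add: extensional_restrict)
        finally show ?thesis .
      qed
      ultimately show "decompose (glue (I, g)) = (I, g)" by (simp add: decompose_def)
    qed
    show "decompose ` ?H \<subseteq> ?L"
    proof (rule image_subsetI)
      fix f assume f: "f \<in> ?H"
      have "support f \<in> indep_sets F"
        using f unfolding indep_sets_def support_def homs_def looped_star_def edges_def
        by auto
      moreover have "restrict f (support f) \<in> support f \<rightarrow>\<^sub>E {1..n}"
        using f by (auto simp: support_def homs_def looped_star_def verts_def)
      ultimately show "decompose f \<in> ?L" by (simp add: decompose_def)
    qed
    show "glue ` ?L \<subseteq> ?H"
    proof clarify
      fix I g assume I: "I \<in> indep_sets F" and g: "g \<in> I \<rightarrow>\<^sub>E {1..n}"
      have val: "glue (I, g) v \<in> {0..n}" if "v \<in> verts F" for v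
        using g that by (auto simp: glue_def)
      have "glue (I, g) \<in> verts F \<rightarrow>\<^sub>E verts (looped_star n)"
        using val unfolding glue_def looped_star_def verts_def by simp
      moreover have "(glue (I, g) u, glue (I, g) v) \<in> edges (looped_star n)"
        if uv: "(u, v) \<in> edges F" for u v
      proof -
        have uvF: "u \<in> verts F" "v \<in> verts F" using uv F by (auto simp: is_graph_def)
        moreover have "glue (I, g) u = 0 \<or> glue (I, g) v = 0"
          using I uv uvF by (auto simp: glue_def indep_sets_def)
        ultimately show ?thesis using val by (auto simp: looped_star_def edges_def)
      qed
      ultimately show "glue (I, g) \<in> ?H" by (auto simp: homs_def)
    qed
  qed
  then have "hom_count F (looped_star n) = card ?L"
    unfolding hom_count_def by (rule bij_betw_same_card)
  also have "\<dots> = (\<Sum>I\<in>indep_sets F. card (I \<rightarrow>\<^sub>E {1..n}))"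
    using finite_indep_sets[OF F] finite_indep_set[OF F] by (intro card_SigmaI) (auto intro: finite_PiE)
  also have "\<dots> = (\<Sum>I\<in>indep_sets F. n ^ card I)"
    using finite_indep_set[OF F] by (intro sum.cong) (auto simp: card_funcsetE)
  finally show ?thesis .
qed

lemma hom_count_looped_star_ge:
  assumes "is_graph G"
  shows "n ^ indep_num G \<le> hom_count G (looped_star n)"
proof -
  obtain I where I: "I \<in> indep_sets G" and "card I = indep_num G"
    using indep_num_attained[OF assms] by blast
  then have "n ^ indep_num G = n ^ card I" by simp
  also have "\<dots> \<le> (\<Sum>I\<in>indep_sets G. n ^ card I)"
    using I finite_indep_sets[OF assms] by (intro member_le_sum) auto
  finally show ?thesis unfolding hom_count_looped_star[OF assms] .
qed

lemma hom_count_looped_star_le: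
  assumes "is_graph F" "n \<ge> 1"
  shows "hom_count F (looped_star n) \<le> 2 ^ card (verts F) * n ^ indep_num F"
proof -
  have "hom_count F (looped_star n) \<le> (\<Sum>I\<in>indep_sets F. n ^ indep_num F)"
    unfolding hom_count_looped_star[OF assms(1)]
    using card_le_indep_num[OF assms(1)] assms(2) by (intro sum_mono power_increasing) auto
  also have "\<dots> = card (indep_sets F) * n ^ indep_num F" by simp
  also have "\<dots> \<le> 2 ^ card (verts F) * n ^ indep_num F"
    using card_indep_sets_le[OF assms(1)] by simp
  finally show ?thesis .
qed

theorem mainTheorem6:
  fixes F :: "'a graph" and G :: "'b graph"
  assumes "is_graph F" and "is_graph G" and "hom_exists F G"
  shows "HDE F G \<le> real (card (verts F)) / real (card (verts G)) \<and>
         HDE F G \<le> real (CC F) / real (CC G) \<and>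
         (indep_num G \<ge> 1 \<longrightarrow> HDE F G \<le> real (indep_num F) / real (indep_num G))"
proof (intro conjI impI)
  note F = assms(1) and G = assms(2) and hom = assms(3)
  show "HDE F G \<le> real (card (verts F)) / real (card (verts G))"
    by (rule HDE_le_growth_ratio[OF F hom, where T = looped_complete and K = 1])
      (simp_all add: is_graph_looped_complete hom_count_looped_complete F G card_verts_pos)
  show "HDE F G \<le> real (CC F) / real (CC G)"
    by (rule HDE_le_growth_ratio[OF F hom, where T = looped_discrete and K = 1])
      (simp_all add: is_graph_looped_discrete hom_count_looped_discrete F G CC_pos)
  show "HDE F G \<le> real (indep_num F) / real (indep_num G)" if "indep_num G \<ge> 1"
  proof (rule HDE_le_growth_ratio[OF F hom, where T = looped_star and K = "2 ^ card (verts F)"])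
    show "real (hom_count F (looped_star n)) \<le> 2 ^ card (verts F) * real n ^ indep_num F"
      if "n \<ge> 1" for n
    proof -
      have "real (hom_count F (looped_star n)) \<le> real (2 ^ card (verts F) * n ^ indep_num F)"
        using hom_count_looped_star_le[OF F that] by (simp only: of_nat_le_iff)
      then show ?thesis by simp
    qed
    show "real n ^ indep_num G \<le> real (hom_count G (looped_star n))" for n
      using hom_count_looped_star_ge[OF G, of n] by (simp flip: of_nat_power)
  qed (use that in \<open>auto simp: is_graph_looped_star\<close>)
qed

end
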